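(* Let $\nu$ be a Borel probability measure on $\operatorname{Hom}(\mathbb{S}^1)$ such that $\Gamma_\nu$ is proximal and does not fix any point in $\mathbb{S}^1$, and let $\eta$ be the (unique) $\nu$-stationary probability measure. Then there exist a sequence $(g_n)_{n\in\mathbb{N}}$ in $\Gamma_\nu$ and a point $z\in\mathbb{S}^1$ such that $(g_n)_*\eta\to\delta_z$ in the weak-$*$ topology.
   Context: $\mathbb{S}^1=\mathbb{R}/\mathbb{Z}$ with usual metric $d$; $\operatorname{Hom}(\mathbb{S}^1)$ is the group of all homeomorphisms of $\mathbb{S}^1$. $X_\nu$ is the topological support of $\nu$, and $\Gamma_\nu$ is the semigroup generated by $X_\nu$, here taken to contain the identity. $\Gamma_\nu$ is proximal if for all $x,y$ there exists $(g_n)$ in $\Gamma_\nu$ with $d(g_n(x),g_n(y))\to0$; it does not fix any point if there is no $x$ with $f(x)=x$ for all $f\in\Gamma_\nu$. A probability measure $\eta$ is $\nu$-stationary if $\eta=\int_{X_\nu}f_*\eta\,d\nu(f)$. *)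

theory Defs
  imports "HOL-Probability.Probability"
begin

definition S1 :: "complex set" where
  "S1 = sphere 0 1"

text \<open>Homeomorphisms of S^1, as maps complex => complex that are the identity
  off the circle (so that each homeomorphism has a unique representative).\<close>
definition HomS1 :: "(complex \<Rightarrow> complex) set" where
  "HomS1 = {f. (\<exists>g. homeomorphism S1 S1 f g) \<and> (\<forall>x. x \<notin> S1 \<longrightarrow> f x = x)}"

definition udist :: "(complex \<Rightarrow> complex) \<Rightarrow> (complex \<Rightarrow> complex) \<Rightarrow> real" where
  "udist f g = (SUP x\<in>S1. dist (f x) (g x))"

definition HomS1_top :: "(complex \<Rightarrow> complex) topology" where
  "HomS1_top = topology (\<lambda>U. U \<subseteq> HomS1 \<and>
      (\<forall>f\<in>U. \<exists>e>0. \<forall>g\<in>HomS1. udist f g < e \<longrightarrow> g \<in> U))"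

definition HomS1_borel :: "(complex \<Rightarrow> complex) measure" where
  "HomS1_borel = sigma HomS1 {U. openin HomS1_top U}"

definition S1_borel :: "complex measure" where
  "S1_borel = restrict_space borel S1"

definition supp :: "(complex \<Rightarrow> complex) measure \<Rightarrow> (complex \<Rightarrow> complex) set" where
  "supp \<nu> = {f \<in> HomS1. \<forall>U. openin HomS1_top U \<and> f \<in> U \<longrightarrow> emeasure \<nu> U > 0}"

inductive_set Gamma_nu :: "(complex \<Rightarrow> complex) measure \<Rightarrow> (complex \<Rightarrow> complex) set"
  for \<nu> where
  Gamma_nu_id: "id \<in> Gamma_nu \<nu>"
| Gamma_nu_comp: "f \<in> supp \<nu> \<Longrightarrow> g \<in> Gamma_nu \<nu> \<Longrightarrow> f \<circ> g \<in> Gamma_nu \<nu>"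

definition proximal :: "(complex \<Rightarrow> complex) set \<Rightarrow> bool" where
  "proximal G \<longleftrightarrow> (\<forall>x\<in>S1. \<forall>y\<in>S1. \<exists>g::nat \<Rightarrow> complex \<Rightarrow> complex.
      (\<forall>n. g n \<in> G) \<and> (\<lambda>n. dist (g n x) (g n y)) \<longlonglongrightarrow> 0)"

definition fixes_point :: "(complex \<Rightarrow> complex) set \<Rightarrow> bool" where
  "fixes_point G \<longleftrightarrow> (\<exists>x\<in>S1. \<forall>f\<in>G. f x = x)"

definition stationary :: "(complex \<Rightarrow> complex) measure \<Rightarrow> complex measure \<Rightarrow> bool" where
  "stationary \<nu> \<eta> \<longleftrightarrow> (\<forall>A\<in>sets S1_borel.
      emeasure \<eta> A = (\<integral>\<^sup>+ f. emeasure \<eta> (f -` A \<inter> space \<eta>) \<partial>\<nu>))"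

definition weak_star_to_dirac :: "(nat \<Rightarrow> complex measure) \<Rightarrow> complex \<Rightarrow> bool" where
  "weak_star_to_dirac \<mu> z \<longleftrightarrow> (\<forall>\<phi>::complex \<Rightarrow> real. continuous_on S1 \<phi> \<longrightarrow>
      (\<lambda>n. \<integral>x. \<phi> x \<partial>(\<mu> n)) \<longlonglongrightarrow> \<phi> z)"

end

theory Submission
  imports Defs
begin

text \<open>
  Fix \<open>\<epsilon> > 0\<close>. Cover the circle by finitely many balls whose punctured versions have
  \<open>\<eta>\<close>-measure below \<open>\<epsilon>\<close> and cut the circle at their centres and boundary points: this
  gives a finite set \<open>F\<close> such that every connected subset of \<open>S1 - F\<close> has measure below
  \<open>\<epsilon>\<close>. Proximality and compactness of \<open>S1 \<times> S1\<close> give, by induction on \<open>F\<close>, some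
  \<open>h \<in> Gamma_nu \<nu>\<close> mapping \<open>F\<close> into the \<open>\<epsilon>\<close>-ball around a point \<open>c\<close>. Since \<open>h\<close> is a
  homeomorphism, the preimage of the arc outside that ball is connected and misses \<open>F\<close>, so
  \<open>h\<close> moves all but \<open>\<epsilon>\<close> of the mass of \<open>\<eta>\<close> into the ball. Letting \<open>\<epsilon> \<rightarrow> 0\<close> along a
  subsequence on which the centres converge to \<open>z\<close> yields \<open>h\<^sub>n\<^sub>* \<eta> \<rightarrow> \<delta>\<^sub>z\<close>.
\<close>

section \<open>The circle\<close>

lemma mem_S1: "y \<in> S1 \<longleftrightarrow> cmod y = 1"
  unfolding S1_def by simp

lemma S1_Re_Im: "y \<in> S1 \<Longrightarrow> Re y ^ 2 + Im y ^ 2 = 1"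
  unfolding mem_S1 by (metis cmod_power2 power_one)

lemma S1_Im_cases:
  assumes "w \<in> S1"
  shows "Im w = sqrt (1 - Re w ^ 2) \<or> Im w = - sqrt (1 - Re w ^ 2)"
proof -
  have "sqrt (1 - Re w ^ 2) = \<bar>Im w\<bar>"
    using S1_Re_Im[OF assms] by (metis add_diff_cancel_left' real_sqrt_abs)
  then show ?thesis
    by linarith
qed

lemma dist_S1_power2:
  assumes "c \<in> S1" "y \<in> S1"
  shows "(dist c y)^2 = 2 - 2 * Re (y * cnj c)"
proof -
  have "(dist c y)^2 = (Re c - Re y)^2 + (Im c - Im y)^2"
    by (simp add: dist_norm cmod_power2)
  then show ?thesis
    using S1_Re_Im[OF assms(1)] S1_Re_Im[OF assms(2)] by (simp add: power2_diff algebra_simps)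
qed

lemma S1_rotate_level_set:
  assumes "c \<in> S1"
  shows "{y \<in> S1. P (Re (y * cnj c))} = (\<lambda>w. w * c) ` {w \<in> S1. P (Re w)}"
proof -
  have cc: "c * cnj c = 1"
    using assms unfolding mem_S1 by (simp add: complex_norm_square[symmetric])
  have cancel: "(w * c) * cnj c = w" for w
    using cc by (simp add: mult.assoc)
  have "y \<in> (\<lambda>w. w * c) ` {w \<in> S1. P (Re w)}" if "y \<in> S1" "P (Re (y * cnj c))" for y
  proof
    show "y = (y * cnj c) * c"
      using cc by (simp add: mult.assoc mult.commute)
    show "y * cnj c \<in> {w \<in> S1. P (Re w)}"
      using that assms by (simp add: mem_S1 norm_mult)
  qed
  moreover have "w * c \<in> S1 \<and> P (Re (w * c * cnj c))" if "w \<in> S1" "P (Re w)" for w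
    unfolding cancel using that assms by (simp add: mem_S1 norm_mult)
  ultimately show ?thesis
    by blast
qed

lemma finite_S1_Re_eq: "finite {w \<in> S1. Re w = t}"
proof (rule finite_subset)
  let ?s = "sqrt (1 - t^2)"
  show "{w \<in> S1. Re w = t} \<subseteq> {Complex t ?s, Complex t (- ?s)}"
  proof
    fix w assume w: "w \<in> {w \<in> S1. Re w = t}"
    then have "Im w = ?s \<or> Im w = - ?s"
      using S1_Im_cases by force
    then show "w \<in> {Complex t ?s, Complex t (- ?s)}"
      using w by (auto simp: complex_eq_iff)
  qed
qed simp

lemma connected_S1_Re_le: "connected {w \<in> S1. Re w \<le> t}"
proof (cases "t < -1 \<or> 1 \<le> t")
  case True
  moreover have "\<bar>Re w\<bar> \<le> 1" if "w \<in> S1" for w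
    using that abs_Re_le_cmod[of w] unfolding mem_S1 by simp
  ultimately have "{w \<in> S1. Re w \<le> t} = {} \<or> {w \<in> S1. Re w \<le> t} = S1"
    by force
  then show ?thesis
    unfolding S1_def by (metis connected_empty connected_sphere DIM_complex order_refl)
next
  case False
  define arc where "arc s = (\<lambda>x. Complex x (s * sqrt (1 - x^2))) ` {-1..t}" for s :: real
  have "connected (arc s)" for s
    unfolding arc_def by (intro connected_continuous_image connected_Icc continuous_intros)
  moreover have "-1 \<in> arc 1 \<inter> arc (-1)"
    using False unfolding arc_def by (force simp: complex_eq_iff)
  moreover have "{w \<in> S1. Re w \<le> t} = arc 1 \<union> arc (-1)"
  proof
    show "{w \<in> S1. Re w \<le> t} \<subseteq> arc 1 \<union> arc (-1)"
    proof
      fix w assume w: "w \<in> {w \<in> S1. Re w \<le> t}"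
      then have "\<bar>Re w\<bar> \<le> 1"
        using abs_Re_le_cmod[of w] unfolding mem_S1 by simp
      then have "Re w \<in> {-1..t}" using w by auto
      moreover have "Im w = sqrt (1 - Re w ^ 2) \<or> Im w = - sqrt (1 - Re w ^ 2)"
        using S1_Im_cases w by blast
      ultimately show "w \<in> arc 1 \<union> arc (-1)"
        unfolding arc_def by (auto simp: image_iff complex_eq_iff intro!: bexI[of _ "Re w"])
    qed
    show "arc 1 \<union> arc (-1) \<subseteq> {w \<in> S1. Re w \<le> t}"
    proof
      fix w assume "w \<in> arc 1 \<union> arc (-1)"
      then obtain x where x: "x \<in> {-1..t}"
        and "w = Complex x (sqrt (1 - x^2)) \<or> w = Complex x (- sqrt (1 - x^2))"
        unfolding arc_def by auto
      moreover have "x^2 \<le> 1"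
        using x False by (auto simp: abs_square_le_1)
      ultimately show "w \<in> {w \<in> S1. Re w \<le> t}"
        by (auto simp: mem_S1 cmod_def)
    qed
  qed
  ultimately show ?thesis
    using connected_Un[of "arc 1" "arc (-1)"] by auto
qed

lemma finite_S1_Int_sphere:
  assumes "c \<in> S1"
  shows "finite (S1 \<inter> sphere c r)"
proof (rule finite_subset)
  show "S1 \<inter> sphere c r \<subseteq> {y \<in> S1. Re (y * cnj c) = 1 - r^2 / 2}"
  proof
    fix y assume y: "y \<in> S1 \<inter> sphere c r"
    then have "(dist c y)^2 = 2 - 2 * Re (y * cnj c)" and "dist c y = r"
      using dist_S1_power2[OF assms] by auto
    then have "r^2 = 2 - 2 * Re (y * cnj c)"
      by metis
    then have "Re (y * cnj c) = 1 - r^2 / 2"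
      by linarith
    with y show "y \<in> {y \<in> S1. Re (y * cnj c) = 1 - r^2 / 2}"
      by blast
  qed
  show "finite {y \<in> S1. Re (y * cnj c) = 1 - r^2 / 2}"
    unfolding S1_rotate_level_set[OF assms, of "\<lambda>x. x = 1 - r^2 / 2"]
    by (intro finite_imageI finite_S1_Re_eq)
qed

lemma connected_S1_Diff_ball:
  assumes "c \<in> S1"
  shows "connected (S1 - ball c \<delta>)"
proof (cases "\<delta> \<le> 0")
  case True
  then show ?thesis
    using ball_empty[OF True] unfolding S1_def by (metis Diff_empty connected_sphere DIM_complex order_refl)
next
  case False
  have "y \<notin> ball c \<delta> \<longleftrightarrow> Re (y * cnj c) \<le> 1 - \<delta>^2 / 2" if "y \<in> S1" for y
  proof -
    have "y \<notin> ball c \<delta> \<longleftrightarrow> \<delta>^2 \<le> (dist c y)^2"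
      using False by (simp add: not_less power_mono_iff)
    then show ?thesis
      using dist_S1_power2[OF assms that] by linarith
  qed
  then have "S1 - ball c \<delta> = {y \<in> S1. Re (y * cnj c) \<le> 1 - \<delta>^2 / 2}"
    by blast
  also have "\<dots> = (\<lambda>w. w * c) ` {w \<in> S1. Re w \<le> 1 - \<delta>^2 / 2}"
    by (rule S1_rotate_level_set[OF assms])
  finally have cap: "S1 - ball c \<delta> = (\<lambda>w. w * c) ` {w \<in> S1. Re w \<le> 1 - \<delta>^2 / 2}" .
  show ?thesis
    unfolding cap by (intro connected_continuous_image connected_S1_Re_le continuous_intros)
qed

section \<open>Proximal semigroups of circle homeomorphisms\<close>

lemma HomS1D:
  assumes "f \<in> HomS1"
  shows "continuous_on S1 f" and "f ` S1 = S1" and "\<exists>g. homeomorphism S1 S1 f g"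
  using assms unfolding HomS1_def homeomorphism_def by auto

lemma id_in_HomS1: "id \<in> HomS1"
  unfolding HomS1_def using homeomorphism_ident[of S1] by (auto simp: id_def)

lemma HomS1_comp: "f \<in> HomS1 \<Longrightarrow> g \<in> HomS1 \<Longrightarrow> f \<circ> g \<in> HomS1"
  unfolding HomS1_def using homeomorphism_compose by fastforce

definition HomS1_submonoid :: "(complex \<Rightarrow> complex) set \<Rightarrow> bool" where
  "HomS1_submonoid G \<longleftrightarrow> G \<subseteq> HomS1 \<and> id \<in> G \<and> (\<forall>f\<in>G. \<forall>g\<in>G. f \<circ> g \<in> G)"

lemma Gamma_nu_subset_HomS1: "Gamma_nu \<nu> \<subseteq> HomS1"
proof
  fix f assume "f \<in> Gamma_nu \<nu>"
  then show "f \<in> HomS1"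
  proof induction
    case Gamma_nu_id
    show ?case by (rule id_in_HomS1)
  next
    case (Gamma_nu_comp f g)
    then show ?case
      using HomS1_comp unfolding supp_def by blast
  qed
qed

lemma Gamma_nu_comp: "f \<in> Gamma_nu \<nu> \<Longrightarrow> g \<in> Gamma_nu \<nu> \<Longrightarrow> f \<circ> g \<in> Gamma_nu \<nu>"
  by (induction rule: Gamma_nu.induct) (simp, metis Gamma_nu.Gamma_nu_comp comp_assoc)

lemma HomS1_submonoid_Gamma_nu: "HomS1_submonoid (Gamma_nu \<nu>)"
  unfolding HomS1_submonoid_def
  using Gamma_nu_subset_HomS1 Gamma_nu_comp Gamma_nu.Gamma_nu_id by blast

lemma proximal_pair_contraction:
  assumes "proximal G" and "G \<subseteq> HomS1" and "a \<in> S1" and "b \<in> S1" and "0 < \<delta>"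
  obtains g \<rho> where "g \<in> G" and "0 < \<rho>"
    and "\<And>p. p \<in> S1 \<Longrightarrow> dist p a < \<rho> \<or> dist p b < \<rho> \<Longrightarrow> dist (g p) (g a) < \<delta>"
proof -
  obtain gs where gsG: "\<And>n. gs n \<in> G" and "(\<lambda>n. dist (gs n a) (gs n b)) \<longlonglongrightarrow> 0"
    using assms(1,3,4) unfolding proximal_def by blast
  then have "\<forall>\<^sub>F n in sequentially. dist (gs n a) (gs n b) < \<delta> / 2"
    using \<open>0 < \<delta>\<close> by (intro order_tendstoD) auto
  then obtain N where "dist (gs N a) (gs N b) < \<delta> / 2"
    unfolding eventually_sequentially by blast
  then obtain g where g: "g \<in> G" and gab: "dist (g a) (g b) < \<delta> / 2"
    using gsG by blast
  have cont: "continuous_on S1 g"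
    using g assms(2) HomS1D(1) by blast
  have "\<exists>\<rho>>0. \<forall>p\<in>S1. dist p a < \<rho> \<longrightarrow> dist (g p) (g a) < \<delta> / 2"
    using cont \<open>a \<in> S1\<close> \<open>0 < \<delta>\<close> half_gt_zero unfolding continuous_on_iff by blast
  then obtain \<rho>a where "0 < \<rho>a" and \<rho>a: "\<And>p. p \<in> S1 \<Longrightarrow> dist p a < \<rho>a \<Longrightarrow> dist (g p) (g a) < \<delta> / 2"
    by blast
  have "\<exists>\<rho>>0. \<forall>p\<in>S1. dist p b < \<rho> \<longrightarrow> dist (g p) (g b) < \<delta> / 2"
    using cont \<open>b \<in> S1\<close> \<open>0 < \<delta>\<close> half_gt_zero unfolding continuous_on_iff by blast
  then obtain \<rho>b where "0 < \<rho>b" and \<rho>b: "\<And>p. p \<in> S1 \<Longrightarrow> dist p b < \<rho>b \<Longrightarrow> dist (g p) (g b) < \<delta> / 2"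
    by blast
  show thesis
  proof
    show "0 < min \<rho>a \<rho>b"
      using \<open>0 < \<rho>a\<close> \<open>0 < \<rho>b\<close> by simp
    fix p assume "p \<in> S1" and "dist p a < min \<rho>a \<rho>b \<or> dist p b < min \<rho>a \<rho>b"
    then consider "dist (g p) (g a) < \<delta> / 2" | "dist (g p) (g b) < \<delta> / 2"
      using \<rho>a \<rho>b by fastforce
    then show "dist (g p) (g a) < \<delta>"
    proof cases
      case 1
      then show ?thesis
        using \<open>0 < \<delta>\<close> by linarith
    next
      case 2
      then show ?thesis
        using gab dist_triangle[of "g p" "g a" "g b"] by (simp add: dist_commute)
    qed
  qed (use g in auto)
qed

lemma proximal_contraction_insert:
  assumes "proximal G" and "HomS1_submonoid G" and "x \<in> S1" and "F \<subseteq> S1" and "0 < \<delta>"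
    and F: "\<And>\<epsilon>. 0 < \<epsilon> \<Longrightarrow> \<exists>h\<in>G. \<exists>c\<in>S1. \<forall>u\<in>F. dist (h u) c < \<epsilon>"
  shows "\<exists>h\<in>G. \<exists>c\<in>S1. \<forall>u\<in>insert x F. dist (h u) c < \<delta>"
proof -
  have GH: "G \<subseteq> HomS1" and comp: "\<And>f g. f \<in> G \<Longrightarrow> g \<in> G \<Longrightarrow> f \<circ> g \<in> G"
    using assms(2) unfolding HomS1_submonoid_def by auto
  have "\<forall>n. \<exists>h\<in>G. \<exists>c\<in>S1. \<forall>u\<in>F. dist (h u) c < inverse (Suc n)"
    using F by simp
  then obtain h c where hG: "\<And>n. h n \<in> G" and cS: "\<And>n. c n \<in> S1"
    and hc: "\<And>n u. u \<in> F \<Longrightarrow> dist (h n u) (c n) < inverse (Suc n)"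
    by metis
  have hS: "h n y \<in> S1" if "y \<in> S1" for n y
    using that hG GH HomS1D(2) by blast
  have "(c n, h n x) \<in> S1 \<times> S1" for n
    using cS hS[OF assms(3)] by blast
  moreover have "compact (S1 \<times> S1)"
    unfolding S1_def by (intro compact_Times compact_sphere)
  ultimately obtain ab r where "ab \<in> S1 \<times> S1" and r: "strict_mono r"
    and lim: "((\<lambda>n. (c n, h n x)) \<circ> r) \<longlonglongrightarrow> ab"
    unfolding compact_eq_seq_compact_metric seq_compact_def by meson
  then obtain a b where ab: "ab = (a, b)" and "a \<in> S1" and "b \<in> S1"
    by blast
  \<comment> \<open>A single element of G, chosen at the limit pair, contracts h (r n) (insert x F) for n large.\<close>
  obtain g \<rho> where "g \<in> G" and "0 < \<rho>"
    and g: "\<And>p. p \<in> S1 \<Longrightarrow> dist p a < \<rho> \<or> dist p b < \<rho> \<Longrightarrow> dist (g p) (g a) < \<delta>"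
    using proximal_pair_contraction[OF assms(1) GH \<open>a \<in> S1\<close> \<open>b \<in> S1\<close> assms(5)] by blast
  have "(\<lambda>n. inverse (real (Suc (r n)))) \<longlonglongrightarrow> 0"
    using LIMSEQ_subseq_LIMSEQ[OF LIMSEQ_inverse_real_of_nat r] by (simp add: o_def)
  moreover have "(\<lambda>n. c (r n)) \<longlonglongrightarrow> a" and "(\<lambda>n. h (r n) x) \<longlonglongrightarrow> b"
    using tendsto_fst[OF lim] tendsto_snd[OF lim] by (simp_all add: ab o_def)
  ultimately have "\<forall>\<^sub>F n in sequentially. inverse (real (Suc (r n))) < \<rho> / 2
      \<and> dist (c (r n)) a < \<rho> / 2 \<and> dist (h (r n) x) b < \<rho>"
    using \<open>0 < \<rho>\<close> by (intro eventually_conj order_tendstoD(2) tendstoD) auto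
  then obtain n where n1: "inverse (real (Suc (r n))) < \<rho> / 2"
    and n2: "dist (c (r n)) a < \<rho> / 2" and n3: "dist (h (r n) x) b < \<rho>"
    using eventually_happens'[OF sequentially_bot] by blast
  have "dist (g (h (r n) u)) (g a) < \<delta>" if "u \<in> insert x F" for u
  proof (rule g)
    show "h (r n) u \<in> S1"
      using that assms(3,4) hS by blast
    show "dist (h (r n) u) a < \<rho> \<or> dist (h (r n) u) b < \<rho>"
    proof (cases "u = x")
      case False
      then have "dist (h (r n) u) (c (r n)) < inverse (Suc (r n))"
        using that hc by simp
      then show ?thesis
        using n1 n2 dist_triangle[of "h (r n) u" a "c (r n)"] by linarith
    qed (use n3 in simp)
  qed
  moreover have "g \<circ> h (r n) \<in> G" and "g a \<in> S1"
    using comp \<open>g \<in> G\<close> hG GH HomS1D(2) \<open>a \<in> S1\<close> by blast+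
  ultimately show ?thesis
    by (metis comp_apply)
qed

lemma proximal_finite_contraction:
  assumes "proximal G" and "HomS1_submonoid G" and "finite F" and "F \<subseteq> S1" and "0 < \<delta>"
  shows "\<exists>h\<in>G. \<exists>c\<in>S1. \<forall>u\<in>F. dist (h u) c < \<delta>"
  using assms(3-5)
proof (induction F arbitrary: \<delta> rule: finite_induct)
  case empty
  have "1 \<in> S1"
    by (simp add: mem_S1)
  then show ?case
    using assms(2) unfolding HomS1_submonoid_def by blast
next
  case (insert x F)
  then show ?case
    using proximal_contraction_insert[OF assms(1,2)] by simp
qed

lemma HomS1_small_off_connected:
  assumes "g \<in> HomS1" and "F \<subseteq> S1" and "c \<in> S1" and "\<forall>u\<in>F. dist (g u) c < \<delta>"
  obtains C where "connected C" and "C \<subseteq> S1 - F" and "\<And>v. v \<in> S1 - C \<Longrightarrow> dist (g v) c < \<delta>"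
proof -
  obtain g' where "homeomorphism S1 S1 g g'"
    using HomS1D(3)[OF assms(1)] by blast
  then have g'g: "\<And>x. x \<in> S1 \<Longrightarrow> g' (g x) = x" and gg': "\<And>y. y \<in> S1 \<Longrightarrow> g (g' y) = y"
    and gS: "g ` S1 = S1" and g'S: "g' ` S1 = S1" and "continuous_on S1 g'"
    unfolding homeomorphism_def by auto
  define C where "C = g' ` (S1 - ball c \<delta>)"
  have "connected C"
    unfolding C_def
    by (rule connected_continuous_image[OF continuous_on_subset[OF \<open>continuous_on S1 g'\<close>]
          connected_S1_Diff_ball[OF assms(3)]]) auto
  moreover have "C \<subseteq> S1 - F"
    using assms(4) g'S gg' unfolding C_def by (force simp: dist_commute)
  moreover have "dist (g v) c < \<delta>" if "v \<in> S1 - C" for v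
    using that gS g'g unfolding C_def by (force simp: dist_commute)
  ultimately show thesis
    using that by blast
qed

section \<open>Cutting the circle into pieces of small measure\<close>

lemma space_S1_borel [simp]: "space S1_borel = S1"
  unfolding S1_borel_def by (simp add: space_restrict_space)

lemma S1_Int_open_in_sets_S1_borel: "open U \<Longrightarrow> S1 \<inter> U \<in> sets S1_borel"
  unfolding S1_borel_def sets_restrict_space by auto

lemma measure_punctured_ball_small:
  assumes "finite_measure \<eta>" and "sets \<eta> = sets S1_borel" and "0 < \<epsilon>"
  obtains r where "0 < r" and "measure \<eta> (S1 \<inter> (ball x r - {x})) < \<epsilon>"
proof -
  interpret finite_measure \<eta> by (rule assms(1))
  define A where "A n = S1 \<inter> (ball x (inverse (Suc n)) - {x})" for n
  have "range A \<subseteq> sets \<eta>"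
    unfolding A_def assms(2) by (auto intro!: S1_Int_open_in_sets_S1_borel open_delete)
  moreover have "decseq A"
  proof (rule decseq_SucI)
    fix n
    have "inverse (real (Suc (Suc n))) \<le> inverse (real (Suc n))"
      by (simp add: le_imp_inverse_le)
    then show "A (Suc n) \<subseteq> A n"
      unfolding A_def using subset_ball by blast
  qed
  moreover have "(\<Inter>n. A n) = {}"
  proof (rule equals0I)
    fix y assume y: "y \<in> (\<Inter>n. A n)"
    then have "0 < dist y x"
      unfolding A_def by auto
    then obtain n where "inverse (Suc n) < dist y x"
      using reals_Archimedean by blast
    moreover have "dist x y < inverse (Suc n)"
      using y unfolding A_def by auto
    ultimately show False
      by (simp add: dist_commute)
  qed
  ultimately have "(\<lambda>n. measure \<eta> (A n)) \<longlonglongrightarrow> 0"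
    using finite_Lim_measure_decseq[of A] by simp
  then have "\<forall>\<^sub>F n in sequentially. measure \<eta> (A n) < \<epsilon>"
    using assms(3) by (rule order_tendstoD(2))
  then obtain n where "measure \<eta> (A n) < \<epsilon>"
    using eventually_happens'[OF sequentially_bot] by blast
  then show thesis
    using that[of "inverse (Suc n)"] unfolding A_def by simp
qed

lemma connected_subset_ball:
  fixes C :: "'a::real_normed_vector set"
  assumes "connected C" and "u \<in> C" and "u \<in> ball x r" and "C \<inter> sphere x r = {}"
  shows "C \<subseteq> ball x r"
proof (rule ccontr)
  assume "\<not> C \<subseteq> ball x r"
  then have "C \<inter> frontier (ball x r) \<noteq> {}"
    using assms(2,3) by (intro connected_Int_frontier[OF assms(1)]) auto
  moreover have "0 < r"
    using assms(3) zero_le_dist[of x u] unfolding mem_ball by linarith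
  ultimately show False
    using assms(4) by simp
qed

lemma S1_finite_cut:
  assumes "finite_measure \<eta>" and "sets \<eta> = sets S1_borel" and "0 < \<epsilon>"
  obtains F where "finite F" and "F \<subseteq> S1"
    and "\<And>C. connected C \<Longrightarrow> C \<subseteq> S1 - F \<Longrightarrow> \<exists>M\<in>sets \<eta>. C \<subseteq> M \<and> measure \<eta> M < \<epsilon>"
proof -
  have "\<exists>r. 0 < r \<and> measure \<eta> (S1 \<inter> (ball x r - {x})) < \<epsilon>" for x
    using measure_punctured_ball_small[OF assms] by blast
  then obtain R where R: "\<And>x. 0 < R x" and small: "\<And>x. measure \<eta> (S1 \<inter> (ball x (R x) - {x})) < \<epsilon>"
    by metis
  have "compact S1"
    unfolding S1_def by simp
  moreover have "S1 \<subseteq> (\<Union>x\<in>S1. ball x (R x))"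
    using R by force
  ultimately obtain T where "T \<subseteq> S1" and "finite T" and T: "S1 \<subseteq> (\<Union>x\<in>T. ball x (R x))"
    using compactE_image[of S1 S1 "\<lambda>x. ball x (R x)"] open_ball by blast
  \<comment> \<open>Cutting S1 at the centres and at the boundary circles of the cover confines every connected
    subset of the rest to a single punctured ball.\<close>
  define F where "F = T \<union> (\<Union>x\<in>T. S1 \<inter> sphere x (R x))"
  have "finite F"
    unfolding F_def using \<open>finite T\<close> \<open>T \<subseteq> S1\<close> finite_S1_Int_sphere by blast
  moreover have "F \<subseteq> S1"
    unfolding F_def using \<open>T \<subseteq> S1\<close> by blast
  moreover have "\<exists>M\<in>sets \<eta>. C \<subseteq> M \<and> measure \<eta> M < \<epsilon>" if "connected C" and CF: "C \<subseteq> S1 - F" for C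
  proof (cases "C = {}")
    case True
    then show ?thesis
      using assms(3) by force
  next
    case False
    then obtain u where "u \<in> C"
      by blast
    then obtain x where "x \<in> T" and "u \<in> ball x (R x)"
      using CF T by blast
    then have "C \<subseteq> ball x (R x)"
      using connected_subset_ball[OF \<open>connected C\<close> \<open>u \<in> C\<close>] CF unfolding F_def by blast
    then have "C \<subseteq> S1 \<inter> (ball x (R x) - {x})"
      using CF \<open>x \<in> T\<close> unfolding F_def by blast
    moreover have "S1 \<inter> (ball x (R x) - {x}) \<in> sets \<eta>"
      unfolding assms(2) by (intro S1_Int_open_in_sets_S1_borel open_delete open_ball)
    ultimately show ?thesis
      using small by blast
  qed
  ultimately show thesis
    using that by blast
qed

lemma proximal_concentration:
  assumes "proximal G" and "HomS1_submonoid G"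
    and "finite_measure \<eta>" and "sets \<eta> = sets S1_borel" and "0 < \<epsilon>"
  shows "\<exists>g\<in>G. \<exists>c\<in>S1. \<exists>M\<in>sets \<eta>. measure \<eta> M < \<epsilon> \<and> (\<forall>x\<in>S1 - M. dist (g x) c < \<epsilon>)"
proof -
  obtain F where "finite F" and "F \<subseteq> S1"
    and cut: "\<And>C. connected C \<Longrightarrow> C \<subseteq> S1 - F \<Longrightarrow> \<exists>M\<in>sets \<eta>. C \<subseteq> M \<and> measure \<eta> M < \<epsilon>"
    using S1_finite_cut[OF assms(3-5)] by blast
  obtain g c where "g \<in> G" and "c \<in> S1" and "\<forall>u\<in>F. dist (g u) c < \<epsilon>"
    using proximal_finite_contraction[OF assms(1,2) \<open>finite F\<close> \<open>F \<subseteq> S1\<close> assms(5)] by blast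
  moreover have "g \<in> HomS1"
    using \<open>g \<in> G\<close> assms(2) unfolding HomS1_submonoid_def by blast
  ultimately obtain C where "connected C" and "C \<subseteq> S1 - F" and "\<And>v. v \<in> S1 - C \<Longrightarrow> dist (g v) c < \<epsilon>"
    using HomS1_small_off_connected \<open>F \<subseteq> S1\<close> by metis
  with cut show ?thesis
    using \<open>g \<in> G\<close> \<open>c \<in> S1\<close> by blast
qed

section \<open>Weak-* convergence to a Dirac mass\<close>

lemma HomS1_measurable:
  assumes "f \<in> HomS1"
  shows "f \<in> measurable S1_borel S1_borel"
  unfolding S1_borel_def
proof (rule measurable_restrict_space2)
  show "f \<in> space (restrict_space borel S1) \<rightarrow> S1"
    using HomS1D(2)[OF assms] by (auto simp: space_restrict_space)
  show "f \<in> borel_measurable (restrict_space borel S1)"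
    using HomS1D(1)[OF assms] by (rule borel_measurable_continuous_on_restrict)
qed

lemma norm_integral_le_off_small_set:
  fixes f :: "'a \<Rightarrow> 'b::{banach, second_countable_topology}"
  assumes "prob_space M" and "f \<in> borel_measurable M" and "A \<in> sets M"
    and "\<And>x. x \<in> space M \<Longrightarrow> norm (f x) \<le> B" and "\<And>x. x \<in> space M - A \<Longrightarrow> norm (f x) \<le> a"
    and "0 \<le> a"
  shows "norm (\<integral>x. f x \<partial>M) \<le> a + B * measure M A"
proof -
  interpret prob_space M by fact
  have "integrable M f"
    using assms(2,4) by (intro integrable_const_bound[where B=B]) auto
  have indicator: "integrable M (indicator A :: 'a \<Rightarrow> real)"
    using assms(3) by (intro integrable_real_indicator) (auto simp: less_top[symmetric])
  have "norm (\<integral>x. f x \<partial>M) \<le> (\<integral>x. norm (f x) \<partial>M)"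
    by (rule integral_norm_bound)
  also have "\<dots> \<le> (\<integral>x. a + B * indicator A x \<partial>M)"
  proof (rule integral_mono)
    show "integrable M (\<lambda>x. norm (f x))"
      using \<open>integrable M f\<close> by simp
    show "integrable M (\<lambda>x. a + B * indicator A x)"
      using indicator by simp
    show "norm (f x) \<le> a + B * indicator A x" if "x \<in> space M" for x
      using that assms(4,5)[of x] assms(6) by (cases "x \<in> A") auto
  qed
  also have "\<dots> = a + B * measure M A"
    using indicator assms(3) by (subst Bochner_Integration.integral_add) (auto simp: prob_space)
  finally show ?thesis .
qed

lemma dist_integral_distr_HomS1_le:
  fixes \<phi> :: "complex \<Rightarrow> real"
  assumes "prob_space \<eta>" and "sets \<eta> = sets S1_borel" and "g \<in> HomS1" and "M \<in> sets \<eta>"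
    and "continuous_on S1 \<phi>" and "z \<in> S1" and B: "\<And>y. y \<in> S1 \<Longrightarrow> \<bar>\<phi> y\<bar> \<le> B"
    and "\<And>x. x \<in> S1 - M \<Longrightarrow> \<bar>\<phi> (g x) - \<phi> z\<bar> \<le> a" and "0 \<le> a"
  shows "dist (\<integral>x. \<phi> x \<partial>distr \<eta> S1_borel g) (\<phi> z) \<le> a + 2 * B * measure \<eta> M"
proof -
  interpret prob_space \<eta> by fact
  have space: "space \<eta> = S1"
    using sets_eq_imp_space_eq[OF assms(2)] by simp
  have gS: "g x \<in> S1" if "x \<in> S1" for x
    using HomS1D(2)[OF assms(3)] that by blast
  have g: "g \<in> measurable \<eta> S1_borel"
    using HomS1_measurable[OF assms(3)] measurable_cong_sets[OF assms(2) refl] by blast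
  have \<phi>: "\<phi> \<in> borel_measurable S1_borel"
    unfolding S1_borel_def using assms(5) by (rule borel_measurable_continuous_on_restrict)
  then have \<phi>g: "(\<lambda>x. \<phi> (g x)) \<in> borel_measurable \<eta>"
    using g by (rule measurable_compose[rotated])
  then have "integrable \<eta> (\<lambda>x. \<phi> (g x))"
    using B gS space by (intro integrable_const_bound[where B=B]) auto
  then have "dist (\<integral>x. \<phi> x \<partial>distr \<eta> S1_borel g) (\<phi> z) = norm (\<integral>x. \<phi> (g x) - \<phi> z \<partial>\<eta>)"
    using g \<phi> by (simp add: integral_distr dist_real_def prob_space)
  also have "\<dots> \<le> a + 2 * B * measure \<eta> M"
  proof (rule norm_integral_le_off_small_set)
    show "norm (\<phi> (g x) - \<phi> z) \<le> 2 * B" if "x \<in> space \<eta>" for x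
      using B[OF gS] B[OF assms(6)] that space by fastforce
  qed (use assms(1,4,8,9) \<phi>g space in auto)
  finally show ?thesis .
qed

lemma weak_star_to_dirac_if_concentrated:
  assumes "prob_space \<eta>" and "sets \<eta> = sets S1_borel" and "z \<in> S1"
    and "\<And>n. g n \<in> HomS1" and "\<And>n. M n \<in> sets \<eta>" and "\<And>n. measure \<eta> (M n) < e n"
    and "\<And>n x. x \<in> S1 - M n \<Longrightarrow> dist (g n x) (c n) < e n"
    and "e \<longlonglongrightarrow> 0" and "c \<longlonglongrightarrow> z"
  shows "weak_star_to_dirac (\<lambda>n. distr \<eta> S1_borel (g n)) z"
  unfolding weak_star_to_dirac_def
proof (intro allI impI)
  fix \<phi> :: "complex \<Rightarrow> real" assume \<phi>: "continuous_on S1 \<phi>"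
  have "compact S1"
    unfolding S1_def by simp
  then have "bounded (\<phi> ` S1)"
    by (intro compact_imp_bounded compact_continuous_image \<phi>)
  then obtain B where "\<forall>v\<in>\<phi> ` S1. norm v \<le> B"
    unfolding bounded_iff by blast
  then have B: "\<And>y. y \<in> S1 \<Longrightarrow> \<bar>\<phi> y\<bar> \<le> B"
    by simp
  then have "0 \<le> B"
    using B[OF assms(3)] by linarith
  show "(\<lambda>n. \<integral>x. \<phi> x \<partial>distr \<eta> S1_borel (g n)) \<longlonglongrightarrow> \<phi> z"
  proof (rule tendstoI)
    fix \<epsilon> :: real assume "0 < \<epsilon>"
    then obtain \<rho> where "0 < \<rho>" and \<rho>: "\<And>y. y \<in> S1 \<Longrightarrow> dist y z < \<rho> \<Longrightarrow> dist (\<phi> y) (\<phi> z) < \<epsilon> / 2"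
      using \<phi> assms(3) half_gt_zero unfolding continuous_on_iff by metis
    define k where "k = min (\<rho> / 2) (\<epsilon> / (4 * B + 4))"
    have "0 < k"
      unfolding k_def using \<open>0 < \<rho>\<close> \<open>0 < \<epsilon>\<close> \<open>0 \<le> B\<close> by simp
    then have "\<forall>\<^sub>F n in sequentially. dist (c n) z < \<rho> / 2 \<and> e n < k"
      using \<open>0 < \<rho>\<close> assms(8,9) by (intro eventually_conj tendstoD order_tendstoD(2)) auto
    then show "\<forall>\<^sub>F n in sequentially. dist (\<integral>x. \<phi> x \<partial>distr \<eta> S1_borel (g n)) (\<phi> z) < \<epsilon>"
    proof (rule eventually_mono)
      fix n assume n: "dist (c n) z < \<rho> / 2 \<and> e n < k"
      have "dist (\<integral>x. \<phi> x \<partial>distr \<eta> S1_borel (g n)) (\<phi> z) \<le> \<epsilon> / 2 + 2 * B * measure \<eta> (M n)"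
      proof (rule dist_integral_distr_HomS1_le[OF assms(1,2,4,5) \<phi> assms(3) B])
        fix x assume x: "x \<in> S1 - M n"
        then have "dist (g n x) z < \<rho>"
          using assms(7)[OF x] n dist_triangle[of "g n x" z "c n"] unfolding k_def by linarith
        moreover have "g n x \<in> S1"
          using HomS1D(2)[OF assms(4)] x by blast
        ultimately show "\<bar>\<phi> (g n x) - \<phi> z\<bar> \<le> \<epsilon> / 2"
          using \<rho> by (fastforce simp: dist_real_def)
      next
        show "0 \<le> \<epsilon> / 2"
          using \<open>0 < \<epsilon>\<close> by simp
      qed
      also have "\<dots> < \<epsilon>"
      proof -
        have "measure \<eta> (M n) \<le> \<epsilon> / (4 * B + 4)"
          using assms(6)[of n] n unfolding k_def by linarith
        then have "2 * B * measure \<eta> (M n) \<le> 2 * B * (\<epsilon> / (4 * B + 4))"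
          using \<open>0 \<le> B\<close> by (intro mult_left_mono) auto
        also have "\<dots> < \<epsilon> / 2"
          using \<open>0 \<le> B\<close> \<open>0 < \<epsilon>\<close> by (simp add: field_simps)
        finally show ?thesis
          by linarith
      qed
      finally show "dist (\<integral>x. \<phi> x \<partial>distr \<eta> S1_borel (g n)) (\<phi> z) < \<epsilon>" .
    qed
  qed
qed

theorem corollary2p7:
  fixes \<nu> :: "(complex \<Rightarrow> complex) measure" and \<eta> :: "complex measure"
  assumes "prob_space \<nu>"
    and "space \<nu> = HomS1" and "sets \<nu> = sets HomS1_borel"
    and "proximal (Gamma_nu \<nu>)" and "\<not> fixes_point (Gamma_nu \<nu>)"
    and "prob_space \<eta>" and "sets \<eta> = sets S1_borel"
    and "stationary \<nu> \<eta>"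
  shows "\<exists>(g::nat \<Rightarrow> complex \<Rightarrow> complex) z. (\<forall>n. g n \<in> Gamma_nu \<nu>) \<and> z \<in> S1 \<and>
           weak_star_to_dirac (\<lambda>n. distr \<eta> S1_borel (g n)) z"
proof -
  have "\<forall>n. \<exists>g\<in>Gamma_nu \<nu>. \<exists>c\<in>S1. \<exists>M\<in>sets \<eta>. measure \<eta> M < inverse (Suc n)
      \<and> (\<forall>x\<in>S1 - M. dist (g x) c < inverse (Suc n))"
    using proximal_concentration[OF assms(4) HomS1_submonoid_Gamma_nu
        prob_space.finite_measure[OF assms(6)] assms(7)] by simp
  then obtain g c M where g: "\<And>n. g n \<in> Gamma_nu \<nu>" and c: "\<And>n. c n \<in> S1"
    and M: "\<And>n. M n \<in> sets \<eta>" "\<And>n. measure \<eta> (M n) < inverse (Suc n)"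
    and gc: "\<And>n x. x \<in> S1 - M n \<Longrightarrow> dist (g n x) (c n) < inverse (Suc n)"
    by metis
  have "compact S1"
    unfolding S1_def by simp
  then obtain z r where "z \<in> S1" and r: "strict_mono r" and "(c \<circ> r) \<longlonglongrightarrow> z"
    using c unfolding compact_eq_seq_compact_metric seq_compact_def by meson
  moreover have "weak_star_to_dirac (\<lambda>n. distr \<eta> S1_borel (g (r n))) z"
  proof (rule weak_star_to_dirac_if_concentrated[OF assms(6,7) \<open>z \<in> S1\<close>, where M="M \<circ> r"
        and e="(\<lambda>n. inverse (Suc n)) \<circ> r" and c="c \<circ> r"])
    show "((\<lambda>n. inverse (Suc n)) \<circ> r) \<longlonglongrightarrow> 0"
      by (rule LIMSEQ_subseq_LIMSEQ[OF LIMSEQ_inverse_real_of_nat r])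
  qed (use g Gamma_nu_subset_HomS1 M gc \<open>(c \<circ> r) \<longlonglongrightarrow> z\<close> in auto)
  ultimately show ?thesis
    using g by (intro exI[of _ "\<lambda>n. g (r n)"] exI[of _ z]) simp
qed

end
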